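(* If $\mathcal{F}$ is a finitary argumentation framework, then there exists a well-ordering $<$ of $A_{\mathcal{F}}$ such that each argument $a$ attacks only finitely many arguments $b$ with $b<a$.
   Context: An argumentation framework is a pair $\mathcal{F}=(A_{\mathcal{F}},R_{\mathcal{F}})$ with $R_{\mathcal{F}}\subseteq A_{\mathcal{F}}\times A_{\mathcal{F}}$; $a$ attacks $b$ means $(a,b)\in R_{\mathcal{F}}$. $\mathcal{F}$ is finitary if every argument is attacked by only finitely many arguments. *)

theory Defs
  imports Main
begin

text \<open>An argumentation framework is a pair (A, R) with R a subset of A x A;
  a attacks b iff (a, b) is in R.\<close>
definition argumentation_framework :: "'a set \<Rightarrow> ('a \<times> 'a) set \<Rightarrow> bool" where
  "argumentation_framework A R \<longleftrightarrow> R \<subseteq> A \<times> A"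

definition finitary :: "'a set \<Rightarrow> ('a \<times> 'a) set \<Rightarrow> bool" where
  "finitary A R \<longleftrightarrow> (\<forall>b\<in>A. finite {a. (a, b) \<in> R})"

end

theory Submission
  imports Defs "HOL-Library.Countable_Set"
begin

text \<open>Fix a well-ordering \<open>W\<close> of all arguments and send each argument \<open>a\<close> to the \<open>W\<close>-least
  argument \<open>\<kappa> a\<close> reachable from \<open>a\<close> along attacks. If \<open>a\<close> attacks \<open>b\<close>, everything reachable
  from \<open>b\<close> is reachable from \<open>a\<close>, so \<open>\<kappa> a \<le> \<kappa> b\<close>. The fibre of \<open>\<kappa>\<close> over \<open>c\<close> consists of
  arguments from which \<open>c\<close> is reachable; since every argument has finitely many attackers,
  this set is countable and can be numbered by \<open>\<nat>\<close>. Order the arguments lexicographically by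
  \<open>\<kappa>\<close> and then by this number. If \<open>a\<close> attacks some \<open>b < a\<close>, then \<open>\<kappa> b \<le> \<kappa> a \<le> \<kappa> b\<close>, so \<open>b\<close>
  lies in the fibre of \<open>a\<close> with a smaller number, and there are only finitely many such \<open>b\<close>.\<close>

lemma finite_relpow_predecessors:
  fixes R :: "'a rel"
  assumes "\<And>y. finite {x. (x, y) \<in> R}"
  shows "finite {x. (x, c) \<in> R ^^ n}"
proof (induction n arbitrary: c)
  case (0 c)
  have "{x. (x, c) \<in> R ^^ 0} = {c}"
    by auto
  then show ?case by simp
next
  case (Suc n)
  have "{x. (x, c) \<in> R ^^ Suc n} \<subseteq> (\<Union>y\<in>{y. (y, c) \<in> R ^^ n}. {x. (x, y) \<in> R})"
    by (blast dest: relpow_Suc_D2)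
  moreover have "finite (\<Union>y\<in>{y. (y, c) \<in> R ^^ n}. {x. (x, y) \<in> R})"
    using Suc assms by blast
  ultimately show ?case by (rule finite_subset)
qed

lemma countable_rtrancl_predecessors:
  assumes "\<And>y. finite {x. (x, y) \<in> R}"
  shows "countable {x. (x, c) \<in> R\<^sup>*}"
proof -
  have "{x. (x, c) \<in> R\<^sup>*} = (\<Union>n. {x. (x, c) \<in> R ^^ n})"
    by (auto simp: rtrancl_power)
  then show ?thesis
    using finite_relpow_predecessors[OF assms] by (simp add: countable_finite)
qed

lemma finite_to_nat_on_less:
  assumes "countable S"
  shows "finite {x \<in> S. to_nat_on S x < n}"
proof (rule finite_subset)
  show "{x \<in> S. to_nat_on S x < n} \<subseteq> from_nat_into S ` {..<n}"
    using from_nat_into_to_nat_on[OF assms]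
    by (metis (mono_tags, lifting) lessThan_iff mem_Collect_eq rev_image_eqI subsetI)
qed simp

lemma well_order_on_inv_image:
  assumes "wf s" and "trans s" and "total_on (h ` A) s" and "inj_on h A"
  shows "well_order_on A {(a, b). a \<in> A \<and> b \<in> A \<and> (a = b \<or> (h a, h b) \<in> s)}"
    (is "well_order_on A ?r")
  unfolding well_order_on_def linear_order_on_def partial_order_on_def preorder_on_def
proof (intro conjI)
  show "?r \<subseteq> A \<times> A" "refl_on A ?r"
    by (auto simp: refl_on_def)
  show "trans ?r"
    using \<open>trans s\<close> by (auto simp: trans_def)
  have "irrefl s"
    using \<open>wf s\<close> by (simp add: irrefl_def wf_not_refl)
  then show "antisym ?r"
    using \<open>trans s\<close> by (auto simp: antisym_def irrefl_def dest: transD)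
  show "total_on A ?r"
    using assms(3,4) by (auto simp: total_on_def inj_on_def)
  have "?r - Id \<subseteq> inv_image s h"
    by auto
  then show "wf (?r - Id)"
    using \<open>wf s\<close> by (blast intro: wf_subset wf_inv_image)
qed

definition least_reachable :: "'a rel \<Rightarrow> 'a rel \<Rightarrow> 'a \<Rightarrow> 'a" where
  "least_reachable W R a = wo_rel.minim W (R\<^sup>* `` {a})"

lemma
  assumes "well_order W"
  shows least_reachable_reachable: "(a, least_reachable W R a) \<in> R\<^sup>*"
    and least_reachable_le: "(a, d) \<in> R\<^sup>* \<Longrightarrow> (least_reachable W R a, d) \<in> W"
proof -
  have "wo_rel W" and field: "Field W = UNIV"
    using assms well_order_on_Field[OF assms] by (simp_all add: wo_rel_def)
  then show "(a, least_reachable W R a) \<in> R\<^sup>*"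
    unfolding least_reachable_def using wo_rel.minim_in[of W "R\<^sup>* `` {a}"] by blast
  show "(a, d) \<in> R\<^sup>* \<Longrightarrow> (least_reachable W R a, d) \<in> W"
    unfolding least_reachable_def using wo_rel.minim_least[OF \<open>wo_rel W\<close>] field by simp
qed

lemma least_reachable_attack_mono:
  assumes "well_order W" and "(a, b) \<in> R"
  shows "(least_reachable W R a, least_reachable W R b) \<in> W"
  using assms by (meson converse_rtrancl_into_rtrancl least_reachable_le least_reachable_reachable)

lemma
  assumes "well_order W"
  shows wf_lex_less_than: "wf ((W - Id) <*lex*> less_than)"
    and trans_lex_less_than: "trans ((W - Id) <*lex*> less_than)"
    and total_lex_less_than: "total ((W - Id) <*lex*> less_than)"
proof -
  have "trans W" "antisym W" "total W" "wf (W - Id)"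
    using assms by (simp_all add: order_on_defs)
  then show "wf ((W - Id) <*lex*> less_than)" "trans ((W - Id) <*lex*> less_than)"
    "total ((W - Id) <*lex*> less_than)"
    by (simp_all add: wf_lex_prod trans_diff_Id total_less_than)
qed

lemma exists_well_order_finite_attacks_below:
  fixes R :: "'a rel"
  assumes "\<And>y. finite {x. (x, y) \<in> R}"
  shows "\<exists>r. well_order_on A r \<and> (\<forall>a\<in>A. finite {b \<in> A. (b, a) \<in> r \<and> b \<noteq> a \<and> (a, b) \<in> R})"
proof -
  obtain W :: "'a rel" where W: "well_order W"
    using well_order_on by blast
  define \<kappa> where "\<kappa> = least_reachable W R"
  define reaching where "reaching c = {x. (x, c) \<in> R\<^sup>*}" for c
  define idx where "idx a = to_nat_on (reaching (\<kappa> a)) a" for a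
  define s where "s = (W - Id) <*lex*> less_than"
  define r where "r = {(a, b). a \<in> A \<and> b \<in> A \<and> (a = b \<or> ((\<kappa> a, idx a), (\<kappa> b, idx b)) \<in> s)}"
  have countable: "countable (reaching c)" for c
    unfolding reaching_def using assms by (rule countable_rtrancl_predecessors)
  have in_reaching: "a \<in> reaching (\<kappa> a)" for a
    unfolding reaching_def \<kappa>_def using least_reachable_reachable[OF W] by simp
  have "inj_on (\<lambda>a. (\<kappa> a, idx a)) A"
    unfolding inj_on_def idx_def by (metis Pair_inject countable in_reaching to_nat_on_inj)
  then have "well_order_on A r"
    unfolding r_def s_def using W
    by (intro well_order_on_inv_image wf_lex_less_than trans_lex_less_than
        total_on_subset[OF total_lex_less_than]) auto
  moreover have "finite {b \<in> A. (b, a) \<in> r \<and> b \<noteq> a \<and> (a, b) \<in> R}" for a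
  proof (rule finite_subset)
    show "finite {b \<in> reaching (\<kappa> a). to_nat_on (reaching (\<kappa> a)) b < idx a}"
      using finite_to_nat_on_less[OF countable] .
    have same_fibre: "\<kappa> b = \<kappa> a \<and> idx b < idx a"
      if "((\<kappa> b, idx b), (\<kappa> a, idx a)) \<in> s" and "(a, b) \<in> R" for b
      using that least_reachable_attack_mono[OF W, of a b] W
      unfolding s_def \<kappa>_def by (auto simp: order_on_defs antisym_def)
    show "{b \<in> A. (b, a) \<in> r \<and> b \<noteq> a \<and> (a, b) \<in> R} \<subseteq>
        {b \<in> reaching (\<kappa> a). to_nat_on (reaching (\<kappa> a)) b < idx a}"
    proof
      fix b
      assume "b \<in> {b \<in> A. (b, a) \<in> r \<and> b \<noteq> a \<and> (a, b) \<in> R}"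
      then have "\<kappa> b = \<kappa> a" and "idx b < idx a"
        using same_fibre unfolding r_def by auto
      then show "b \<in> {b \<in> reaching (\<kappa> a). to_nat_on (reaching (\<kappa> a)) b < idx a}"
        using in_reaching[of b] unfolding idx_def by simp
    qed
  qed
  ultimately show ?thesis
    by blast
qed

lemma finitary_finite_attackers:
  assumes "argumentation_framework A R" and "finitary A R"
  shows "finite {x. (x, y) \<in> R}"
proof (cases "y \<in> A")
  case True
  then show ?thesis
    using assms(2) unfolding finitary_def by blast
next
  case False
  then have "{x. (x, y) \<in> R} = {}"
    using assms(1) unfolding argumentation_framework_def by blast
  then show ?thesis
    by simp
qed

theorem lemma1:
  fixes A :: "'a set" and R :: "('a \<times> 'a) set"
  assumes "argumentation_framework A R"
    and "finitary A R"
  shows "\<exists>r. well_order_on A r \<and>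
           (\<forall>a\<in>A. finite {b \<in> A. (b, a) \<in> r \<and> b \<noteq> a \<and> (a, b) \<in> R})"
  using finitary_finite_attackers[OF assms] by (rule exists_well_order_finite_attacks_below)

end
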